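(* For natural concepts $C_1,C_2,D_1,D_2,E_1,E_2$: $\{C_1:D_1::D_2:C_2,\ C_1:E_1::E_2:C_2\}\models D_1:E_1::E_2:D_2$.
   Context: Concepts: $C,D::=\top\mid\bot\mid A\mid C\sqcap D\mid \exists r.C\mid N$; natural concepts: $N,N'::=A'\mid N\sqcap N'\mid N\bowtie N'\mid \exists r'.N$, with $A$ a concept name, $A'$ a natural concept name, $r$ a role name, $r'$ an intra-domain role name. A domain constrained interpretation is $\mathfrak{I}=(\mathcal{I},[\mathcal{F}_1,\dots,\mathcal{F}_k],\mathcal{X},\pi,\sim,\mathcal{S})$ where $\mathcal{I}=(\Delta^{\mathcal{I}},\cdot^{\mathcal{I}})$ is a classical DL interpretation, $[\mathcal{F}_1,\dots,\mathcal{F}_k]$ partitions a nonempty finite set $\mathcal{F}$, $\mathcal{X}\subseteq2^{\mathcal{F}}$ with $\mathcal{F}\in\mathcal{X}$, $\pi:\Delta^{\mathcal{I}}\to2^{\mathcal{F}}$, $\sim$ an equivalence relation on $\{1,\dots,k\}$, $\mathcal{S}=\{\sigma_{(s,t)}\mid(s,t)\in\sim\}$ with $\sigma_{(s,t)}:\mathcal{F}_s\to\mathcal{F}_t$ bijections. With $\mathcal{C}=\{G\subseteq\mathcal{F}\mid X\not\subseteq G\ \forall X\in\mathcal{X}\}$ and $\mathcal{C}^i=\{G\in\mathcal{C}\mid G\subseteq\mathcal{F}_i\}$ it is required: (1) $X\not\subseteq\pi(d)$ for all $d$, $X\in\mathcal{X}$; (2) each $G\in\mathcal{C}$ is $\pi(d)$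 for some $d$; (3) $\sigma_{(s,t)}^{-1}=\sigma_{(t,s)}$, $\sigma_{(t,u)}\circ\sigma_{(s,t)}=\sigma_{(s,u)}$; (4) $\sigma_{(i,j)}(G)\in\mathcal{C}$ for $G\in\mathcal{C}^i$, $(i,j)\in\sim$; (5) $\{f,g\}\in\mathcal{X}$ whenever $f\in\mathcal{F}_i$, $g\in\mathcal{F}_j$, $(i,j)\in\sim$, $i\neq j$. $\varphi(C)=\bigcap\{\pi(d)\mid d\in C^{\mathcal{I}}\}$ ($=\mathcal{F}$ if $C^{\mathcal{I}}=\emptyset$). Concepts are interpreted as usual, with $(N\bowtie N')^{\mathcal{I}}=\{d\mid\varphi(N)\cap\varphi(N')\subseteq\pi(d)\}$. An intra-domain relation $r$: there is $\kappa_r:2^{\mathcal{F}}\to2^{\mathcal{F}}$ with $(\exists r.C)^{\mathcal{I}}=\{d\mid\kappa_r(\varphi(C))\subseteq\pi(d)\}$ for all $C$, $\kappa_r(G)=\bigcup_i\kappa_r(G\cap\mathcal{F}_i)$ for $G\in\mathcal{C}$, $\kappa_r(G)\subseteq\mathcal{F}_i$ for $G\in\mathcal{C}^i$, $\kappa_r(\sigma_{(i,j)}(G))=\sigma_{(i,j)}(\kappa_r(G))$ for $(i,j)\in\sim$, $G\in\mathcal{C}^i$, and $\kappa_r(G)\neq\emptyset$ for $G\in\mathcal{C}^i\setminus\{\emptyset\}$. $\delta(C)=\{i\mid\mathcal{F}_i\cap\varphi(C)\neq\emptyset\}$. For $U=\{(s_1,t_1),\dots,(s_l,t_l)\}\subseteq\sim$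 with pairwise distinct $s_i$ and pairwise distinct $t_i$, the domain translation $\sigma_U:\mathcal{F}\to\mathcal{F}$ maps $f\in\mathcal{F}_{s_i}$ to $\sigma_{(s_i,t_i)}(f)$ and fixes all other features; $\mathrm{src}(U)=\{s_i\}$, $\mathrm{tgt}(U)=\{t_i\}$. $\mu(C,D)$ is the set of $\sigma_U$ with $\varphi(D)=\sigma_U(\varphi(C))$, $\mathrm{src}(U)\subseteq\delta(C)$, $\mathrm{tgt}(U)\cap(\delta(C)\setminus\mathrm{src}(U))=\emptyset$. An analogy assertion $C_1:C_2::D_1:D_2$ (between natural concepts) is satisfied in $\mathfrak{I}$ iff $\mu(C_1,C_2)\cap\mu(D_1,D_2)\neq\emptyset$; a concept inclusion $C\sqsubseteq D$ is satisfied iff $C^{\mathcal{I}}\subseteq D^{\mathcal{I}}$. A TBox is a finite set of concept inclusions and analogy assertions. $\mathfrak{I}$ is a model of a TBox $\mathcal{T}$ if it satisfies all its elements, every natural concept $N$ in $\mathcal{T}$ satisfies $N^{\mathcal{I}}=\{d\mid\varphi(N)\subseteq\pi(d)\}$, and every intra-domain role name is interpreted as an intra-domain relation. $\mathcal{T}\models\psi$ means every model of $\mathcal{T}$ satisfies $\psi$. *)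

theory Defs
  imports Main
begin

text \<open>Role names: ordinary role names (R r) and intra-domain role names (IR r).\<close>
datatype 'r role = R 'r | IR 'r

text \<open>Concepts. CN a is a concept name, NN a a natural concept name,
  Bowtie N N' the operator written with the bowtie symbol.\<close>
datatype ('a,'r) concept =
    Top | Bot | CN 'a | NN 'a
  | Conj "('a,'r) concept" "('a,'r) concept"
  | Ex "'r role" "('a,'r) concept"
  | Bowtie "('a,'r) concept" "('a,'r) concept"

fun natural :: "('a,'r) concept \<Rightarrow> bool" where
  "natural (NN a) = True"
| "natural (Conj N N') = (natural N \<and> natural N')"
| "natural (Bowtie N N') = (natural N \<and> natural N')"
| "natural (Ex (IR r) N) = natural N"
| "natural _ = False"

fun wf_concept :: "('a,'r) concept \<Rightarrow> bool" where
  "wf_concept (Conj C D) = (wf_concept C \<and> wf_concept D)"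
| "wf_concept (Ex r C) = wf_concept C"
| "wf_concept (Bowtie N N') = (natural N \<and> natural N')"
| "wf_concept _ = True"

primrec subconcepts :: "('a,'r) concept \<Rightarrow> ('a,'r) concept set" where
  "subconcepts Top = {Top}"
| "subconcepts Bot = {Bot}"
| "subconcepts (CN a) = {CN a}"
| "subconcepts (NN a) = {NN a}"
| "subconcepts (Conj C D) = insert (Conj C D) (subconcepts C \<union> subconcepts D)"
| "subconcepts (Ex r C) = insert (Ex r C) (subconcepts C)"
| "subconcepts (Bowtie C D) = insert (Bowtie C D) (subconcepts C \<union> subconcepts D)"

datatype ('a,'r) axiom =
    CI "('a,'r) concept" "('a,'r) concept"
  | Analogy "('a,'r) concept" "('a,'r) concept" "('a,'r) concept" "('a,'r) concept"

fun ax_concepts :: "('a,'r) axiom \<Rightarrow> ('a,'r) concept set" where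
  "ax_concepts (CI C D) = subconcepts C \<union> subconcepts D"
| "ax_concepts (Analogy A B C D) =
     subconcepts A \<union> subconcepts B \<union> subconcepts C \<union> subconcepts D"

text \<open>The partition [F_1,...,F_k] is given by k and the map part on indices 1..k;
  sig s t is the bijection sigma_(s,t).\<close>
record ('a,'r,'d,'f) dci =
  Delta :: "'d set"
  cint :: "'a \<Rightarrow> 'd set"
  nint :: "'a \<Rightarrow> 'd set"
  rint :: "'r role \<Rightarrow> ('d \<times> 'd) set"
  feats :: "'f set"
  nparts :: nat
  part :: "nat \<Rightarrow> 'f set"
  XX :: "'f set set"
  ppi :: "'d \<Rightarrow> 'f set"
  sim :: "(nat \<times> nat) set"
  sig :: "nat \<Rightarrow> nat \<Rightarrow> 'f \<Rightarrow> 'f"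

definition Cset :: "('a,'r,'d,'f) dci \<Rightarrow> 'f set set" where
  "Cset I = {G. G \<subseteq> feats I \<and> (\<forall>X\<in>XX I. \<not> X \<subseteq> G)}"

definition Ci :: "('a,'r,'d,'f) dci \<Rightarrow> nat \<Rightarrow> 'f set set" where
  "Ci I i = {G \<in> Cset I. G \<subseteq> part I i}"

definition valid_dci :: "('a,'r,'d,'f) dci \<Rightarrow> bool" where
  "valid_dci I \<longleftrightarrow>
     Delta I \<noteq> {} \<and>
     (\<forall>a. cint I a \<subseteq> Delta I) \<and> (\<forall>a. nint I a \<subseteq> Delta I) \<and>
     (\<forall>r. rint I r \<subseteq> Delta I \<times> Delta I) \<and>
     finite (feats I) \<and> feats I \<noteq> {} \<and>
     (\<forall>i\<in>{1..nparts I}. part I i \<noteq> {}) \<and>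
     (\<forall>i\<in>{1..nparts I}. \<forall>j\<in>{1..nparts I}. i \<noteq> j \<longrightarrow> part I i \<inter> part I j = {}) \<and>
     (\<Union>i\<in>{1..nparts I}. part I i) = feats I \<and>
     XX I \<subseteq> Pow (feats I) \<and> feats I \<in> XX I \<and>
     (\<forall>d\<in>Delta I. ppi I d \<subseteq> feats I) \<and>
     equiv {1..nparts I} (sim I) \<and>
     (\<forall>(s,t)\<in>sim I. bij_betw (sig I s t) (part I s) (part I t)) \<and>
     \<comment> \<open>(1)\<close>
     (\<forall>d\<in>Delta I. \<forall>X\<in>XX I. \<not> X \<subseteq> ppi I d) \<and>
     \<comment> \<open>(2)\<close>
     (\<forall>G\<in>Cset I. \<exists>d\<in>Delta I. ppi I d = G) \<and>
     \<comment> \<open>(3)\<close>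
     (\<forall>(s,t)\<in>sim I. \<forall>x\<in>part I s. sig I t s (sig I s t x) = x) \<and>
     (\<forall>s t u. (s,t) \<in> sim I \<and> (t,u) \<in> sim I \<longrightarrow>
         (\<forall>x\<in>part I s. sig I t u (sig I s t x) = sig I s u x)) \<and>
     \<comment> \<open>(4)\<close>
     (\<forall>(i,j)\<in>sim I. \<forall>G\<in>Ci I i. sig I i j ` G \<in> Cset I) \<and>
     \<comment> \<open>(5)\<close>
     (\<forall>(i,j)\<in>sim I. i \<noteq> j \<longrightarrow> (\<forall>f\<in>part I i. \<forall>g\<in>part I j. {f,g} \<in> XX I))"

definition phiS :: "('a,'r,'d,'f) dci \<Rightarrow> 'd set \<Rightarrow> 'f set" where
  "phiS I S = (if S = {} then feats I else \<Inter>(ppi I ` S))"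

primrec ext :: "('a,'r,'d,'f) dci \<Rightarrow> ('a,'r) concept \<Rightarrow> 'd set" where
  "ext I Top = Delta I"
| "ext I Bot = {}"
| "ext I (CN a) = cint I a"
| "ext I (NN a) = nint I a"
| "ext I (Conj C D) = ext I C \<inter> ext I D"
| "ext I (Ex r C) = {d \<in> Delta I. \<exists>e. (d,e) \<in> rint I r \<and> e \<in> ext I C}"
| "ext I (Bowtie C D) =
     {d \<in> Delta I. phiS I (ext I C) \<inter> phiS I (ext I D) \<subseteq> ppi I d}"

definition phi :: "('a,'r,'d,'f) dci \<Rightarrow> ('a,'r) concept \<Rightarrow> 'f set" where
  "phi I C = phiS I (ext I C)"

definition intra_domain :: "('a,'r,'d,'f) dci \<Rightarrow> 'r role \<Rightarrow> bool" where
  "intra_domain I r \<longleftrightarrow> (\<exists>\<kappa> :: 'f set \<Rightarrow> 'f set.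
     (\<forall>G. G \<subseteq> feats I \<longrightarrow> \<kappa> G \<subseteq> feats I) \<and>
     (\<forall>C. wf_concept C \<longrightarrow> ext I (Ex r C) = {d \<in> Delta I. \<kappa> (phi I C) \<subseteq> ppi I d}) \<and>
     (\<forall>G\<in>Cset I. \<kappa> G = (\<Union>i\<in>{1..nparts I}. \<kappa> (G \<inter> part I i))) \<and>
     (\<forall>i\<in>{1..nparts I}. \<forall>G\<in>Ci I i. \<kappa> G \<subseteq> part I i) \<and>
     (\<forall>(i,j)\<in>sim I. \<forall>G\<in>Ci I i. \<kappa> (sig I i j ` G) = sig I i j ` \<kappa> G) \<and>
     (\<forall>i\<in>{1..nparts I}. \<forall>G\<in>Ci I i. G \<noteq> {} \<longrightarrow> \<kappa> G \<noteq> {}))"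

definition delta :: "('a,'r,'d,'f) dci \<Rightarrow> ('a,'r) concept \<Rightarrow> nat set" where
  "delta I C = {i \<in> {1..nparts I}. part I i \<inter> phi I C \<noteq> {}}"

definition validU :: "('a,'r,'d,'f) dci \<Rightarrow> (nat \<times> nat) set \<Rightarrow> bool" where
  "validU I U \<longleftrightarrow> U \<subseteq> sim I \<and> inj_on fst U \<and> inj_on snd U"

definition sigU :: "('a,'r,'d,'f) dci \<Rightarrow> (nat \<times> nat) set \<Rightarrow> 'f \<Rightarrow> 'f" where
  "sigU I U f =
     (if \<exists>p\<in>U. f \<in> part I (fst p)
      then (let p = (SOME p. p \<in> U \<and> f \<in> part I (fst p)) in sig I (fst p) (snd p) f)
      else f)"

definition mu :: "('a,'r,'d,'f) dci \<Rightarrow> ('a,'r) concept \<Rightarrow> ('a,'r) concept \<Rightarrow> ('f \<Rightarrow> 'f) set" where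
  "mu I C D = {sigU I U | U. validU I U \<and> phi I D = sigU I U ` phi I C \<and>
                  fst ` U \<subseteq> delta I C \<and> snd ` U \<inter> (delta I C - fst ` U) = {}}"

fun sat :: "('a,'r,'d,'f) dci \<Rightarrow> ('a,'r) axiom \<Rightarrow> bool" where
  "sat I (CI C D) = (ext I C \<subseteq> ext I D)"
| "sat I (Analogy C1 C2 D1 D2) = (mu I C1 C2 \<inter> mu I D1 D2 \<noteq> {})"

definition is_model :: "('a,'r,'d,'f) dci \<Rightarrow> ('a,'r) axiom set \<Rightarrow> bool" where
  "is_model I T \<longleftrightarrow> valid_dci I \<and> (\<forall>ax\<in>T. sat I ax) \<and>
     (\<forall>N \<in> (\<Union>ax\<in>T. ax_concepts ax). natural N \<longrightarrow>
         ext I N = {d \<in> Delta I. phi I N \<subseteq> ppi I d}) \<and>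
     (\<forall>r. intra_domain I (IR r))"

end

theory Submission
  imports Defs
begin

text \<open>
  A domain translation \<sigma>_U acts on each domain F_s through the bijection
  \<sigma>_(s,t), so it is determined by its index map s \<mapsto> t. Hence C : D :: C' : D' holds
  iff one \<sim>-class preserving index map u, admissible for \<delta>(C) and \<delta>(C'), sends \<phi>(C) to
  \<phi>(D) and \<phi>(C') to \<phi>(D'). By conditions (1) and (5), if \<phi>(C) \<noteq> F then \<delta>(C) meets every
  \<sim>-class in at most one index.

  Let u realize C1 : D1 :: D2 : C2 and v realize C1 : E1 :: E2 : C2. If \<phi>(C1), \<phi>(D2) and
  \<phi>(E2) all differ from F, the index map w sending u(y) to v(y) for y \<in> \<delta>(C1) and fixing
  every other index realizes D1 : E1 :: E2 : D2: all maps involved preserve \<sim>-classes and each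
  domain set meets a class at most once, so this is a case analysis inside a single class.
  Otherwise \<phi>(C1) = F or \<phi>(C2) = F, and then \<phi>(D1) = \<phi>(E1) and \<phi>(D2) = \<phi>(E2), so the
  identity works.
\<close>

section \<open>Index maps over an equivalence relation\<close>

definition moved :: "'i set \<Rightarrow> ('i \<Rightarrow> 'i) \<Rightarrow> 'i set" where
  "moved A u = {x \<in> A. u x \<noteq> x}"

text \<open>An index map u stands for the domain translation \<sigma>_U with U = {(s, u s) | u s \<noteq> s};
  \<open>admissible_for A u (\<delta>(C))\<close> is the side condition src(U) \<subseteq> \<delta>(C),
  tgt(U) \<inter> (\<delta>(C) - src(U)) = {} in the definition of \<mu>(C, D).\<close>
definition translation_map :: "'i set \<Rightarrow> ('i \<times> 'i) set \<Rightarrow> ('i \<Rightarrow> 'i) \<Rightarrow> bool" where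
  "translation_map A S u \<longleftrightarrow> (\<forall>x\<in>A. (x, u x) \<in> S) \<and> inj_on u (moved A u)"

definition admissible_for :: "'i set \<Rightarrow> ('i \<Rightarrow> 'i) \<Rightarrow> 'i set \<Rightarrow> bool" where
  "admissible_for A u K \<longleftrightarrow> moved A u \<subseteq> K \<and> u ` moved A u \<inter> (K - moved A u) = {}"

definition discrete :: "('i \<times> 'i) set \<Rightarrow> 'i set \<Rightarrow> bool" where
  "discrete S K \<longleftrightarrow> (\<forall>a\<in>K. \<forall>b\<in>K. (a, b) \<in> S \<longrightarrow> a = b)"

lemma discreteD: "discrete S K \<Longrightarrow> a \<in> K \<Longrightarrow> b \<in> K \<Longrightarrow> (a, b) \<in> S \<Longrightarrow> a = b"
  unfolding discrete_def by blast

lemma equiv_sym: "equiv A S \<Longrightarrow> (a, b) \<in> S \<Longrightarrow> (b, a) \<in> S"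
  by (meson equivE symD)

lemma equiv_trans: "equiv A S \<Longrightarrow> (a, b) \<in> S \<Longrightarrow> (b, c) \<in> S \<Longrightarrow> (a, c) \<in> S"
  by (meson equivE transD)

lemma equiv_common:
  assumes "equiv A S" "(a, c) \<in> S" "(b, c) \<in> S"
  shows "(a, b) \<in> S"
  using equiv_trans[OF assms(1,2) equiv_sym[OF assms(1,3)]] .

lemma translation_map_closed: "equiv A S \<Longrightarrow> translation_map A S u \<Longrightarrow> x \<in> A \<Longrightarrow> u x \<in> A"
  unfolding translation_map_def using equiv_type by blast

lemma discrete_image:
  assumes "equiv A S" "\<forall>x\<in>A. (x, u x) \<in> S" "K \<subseteq> A" "discrete S K"
  shows "discrete S (u ` K)"
  unfolding discrete_def
proof (intro ballI impI)
  fix a b assume "a \<in> u ` K" "b \<in> u ` K" and ab: "(a, b) \<in> S"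
  then obtain x y where "x \<in> K" "y \<in> K" and a: "a = u x" and b: "b = u y" by blast
  then have "(x, a) \<in> S" "(y, b) \<in> S" using assms(2,3) by auto
  then have "(x, y) \<in> S" using equiv_common[OF assms(1) equiv_trans[OF assms(1) _ ab]] by blast
  then show "a = b" using discreteD[OF assms(4) \<open>x \<in> K\<close> \<open>y \<in> K\<close>] a b by simp
qed

lemma inj_on_discrete:
  assumes "equiv A S" "\<forall>x\<in>A. (x, u x) \<in> S" "K \<subseteq> A" "discrete S K"
  shows "inj_on u K"
proof (rule inj_onI)
  fix x y assume "x \<in> K" "y \<in> K" "u x = u y"
  then have "(x, u x) \<in> S" "(y, u y) \<in> S" using assms(2,3) by blast+
  then have "(x, y) \<in> S" using equiv_common[OF assms(1), of x "u x" y] \<open>u x = u y\<close> by simp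
  then show "x = y" by (rule discreteD[OF assms(4) \<open>x \<in> K\<close> \<open>y \<in> K\<close>])
qed

lemma translation_map_admissible_for_discrete:
  assumes "equiv A S" "\<forall>x\<in>A. (x, u x) \<in> S" "K \<subseteq> A" "discrete S K" "moved A u \<subseteq> K"
  shows "translation_map A S u" "admissible_for A u K"
proof -
  have inj: "inj_on u K" using inj_on_discrete[OF assms(1-4)] .
  then show "translation_map A S u"
    unfolding translation_map_def using assms(2,5) inj_on_subset by blast
  have "u y \<notin> K - moved A u" if "y \<in> moved A u" for y
  proof
    assume "u y \<in> K - moved A u"
    then have "u (u y) = u y" "u y \<in> K" using assms(3) unfolding moved_def by auto
    moreover have "y \<in> K" "u y \<noteq> y" using that assms(5) unfolding moved_def by auto
    ultimately show False using inj unfolding inj_on_def by metis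
  qed
  then show "admissible_for A u K" unfolding admissible_for_def using assms(5) by blast
qed

lemma admissible_for_all_inj_on:
  assumes "translation_map A S u" "admissible_for A u A"
  shows "inj_on u A"
proof (rule inj_onI)
  fix x y assume x: "x \<in> A" and y: "y \<in> A" and eq: "u x = u y"
  have no_hit: "u z \<noteq> w" if "z \<in> A" "u z \<noteq> z" "w \<in> A" "u w = w" for z w
  proof
    assume "u z = w"
    then have "w \<in> u ` moved A u \<inter> (A - moved A u)" using that unfolding moved_def by auto
    then show False using assms(2) unfolding admissible_for_def by blast
  qed
  show "x = y"
  proof (cases "u x = x \<or> u y = y")
    case True
    then show ?thesis using no_hit[OF x _ y] no_hit[OF y _ x] eq by metis
  next
    case False
    then show ?thesis using assms(1) x y eq unfolding translation_map_def inj_on_def moved_def by blast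
  qed
qed

lemma admissible_for_all_and_discrete:
  assumes "equiv A S" "translation_map A S u" "admissible_for A u A"
    and "K \<subseteq> A" "discrete S K" "admissible_for A u K" "x \<in> A"
  shows "u x = x"
proof (rule ccontr)
  assume moves: "u x \<noteq> x"
  then have "x \<in> K" using assms(6,7) unfolding admissible_for_def moved_def by blast
  have "(x, u x) \<in> S" using assms(2,7) unfolding translation_map_def by blast
  have "u x \<in> A" using translation_map_closed[OF assms(1,2,7)] .
  have "u x \<notin> K" using discreteD[OF assms(5) \<open>x \<in> K\<close> _ \<open>(x, u x) \<in> S\<close>] moves by auto
  then have "u x \<in> A - moved A u" using \<open>u x \<in> A\<close> assms(6) unfolding admissible_for_def by blast
  moreover have "u x \<in> u ` moved A u" using assms(7) moves unfolding moved_def by blast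
  ultimately show False using assms(3) unfolding admissible_for_def by blast
qed

definition index_map :: "('i \<times> 'i) set \<Rightarrow> 'i \<Rightarrow> 'i" where
  "index_map U x = (if x \<in> fst ` U then (SOME t. (x, t) \<in> U) else x)"

definition pairs_of :: "'i set \<Rightarrow> ('i \<Rightarrow> 'i) \<Rightarrow> ('i \<times> 'i) set" where
  "pairs_of A w = (\<lambda>x. (x, w x)) ` moved A w"

lemma index_map_eq: "inj_on fst U \<Longrightarrow> (x, t) \<in> U \<Longrightarrow> index_map U x = t"
  unfolding index_map_def inj_on_def by (force intro: some_equality)

lemma index_map_outside: "x \<notin> fst ` U \<Longrightarrow> index_map U x = x"
  unfolding index_map_def by simp

lemma moved_index_map: "moved A (index_map U) \<subseteq> fst ` U"
proof
  fix x assume "x \<in> moved A (index_map U)"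
  then have "index_map U x \<noteq> x" unfolding moved_def by simp
  then show "x \<in> fst ` U" using index_map_outside[of x U] by blast
qed

lemma translation_map_index_map:
  assumes "equiv A S" "U \<subseteq> S" "inj_on fst U" "inj_on snd U"
  shows "translation_map A S (index_map U)"
  unfolding translation_map_def
proof
  show "\<forall>x\<in>A. (x, index_map U x) \<in> S"
  proof
    fix x assume "x \<in> A"
    show "(x, index_map U x) \<in> S"
    proof (cases "x \<in> fst ` U")
      case True
      then obtain t where xt: "(x, t) \<in> U" by force
      then show ?thesis using assms(2) index_map_eq[OF assms(3) xt] by auto
    next
      case False
      then show ?thesis
        using index_map_outside[OF False] \<open>x \<in> A\<close> assms(1) unfolding equiv_def refl_on_def
        by simp
    qed
  qed
  show "inj_on (index_map U) (moved A (index_map U))"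
  proof (rule inj_onI)
    fix x y assume "x \<in> moved A (index_map U)" "y \<in> moved A (index_map U)"
      and eq: "index_map U x = index_map U y"
    then have "x \<in> fst ` U" "y \<in> fst ` U" using subsetD[OF moved_index_map] by auto
    then obtain t t' where xt: "(x, t) \<in> U" and yt: "(y, t') \<in> U" by force
    have "snd (x, t) = snd (y, t')" using eq index_map_eq[OF assms(3) xt] index_map_eq[OF assms(3) yt] by simp
    then show "x = y" using inj_onD[OF assms(4) _ xt yt] by simp
  qed
qed

lemma admissible_for_index_map:
  assumes "inj_on fst U" "inj_on snd U" "K \<subseteq> A"
    and "fst ` U \<subseteq> K" "snd ` U \<inter> (K - fst ` U) = {}"
  shows "admissible_for A (index_map U) K"
proof -
  have "index_map U y \<notin> K - moved A (index_map U)" if y: "y \<in> moved A (index_map U)" for y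
  proof
    assume x: "index_map U y \<in> K - moved A (index_map U)"
    obtain t where yt: "(y, t) \<in> U" using subsetD[OF moved_index_map y] by force
    have t: "index_map U y = t" by (rule index_map_eq[OF assms(1) yt])
    then have tK: "t \<in> K" "t \<notin> moved A (index_map U)" using x by auto
    have "t \<in> snd ` U" using yt by force
    then have "t \<in> fst ` U" using assms(5) tK by blast
    then obtain t' where tt': "(t, t') \<in> U" by force
    have "t \<in> A" using tK(1) assms(3) by blast
    then have "index_map U t = t" using tK(2) unfolding moved_def by blast
    then have "(t, t) \<in> U" using tt' index_map_eq[OF assms(1) tt'] by simp
    have "(y, t) = (t, t)" by (rule inj_onD[OF assms(2) _ yt \<open>(t, t) \<in> U\<close>]) simp
    then show False using y t unfolding moved_def by simp
  qed
  then have "index_map U ` moved A (index_map U) \<inter> (K - moved A (index_map U)) = {}" by blast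
  moreover have "moved A (index_map U) \<subseteq> K" using moved_index_map assms(4) by (rule order_trans)
  ultimately show ?thesis unfolding admissible_for_def by blast
qed

lemma fst_pairs_of: "fst ` pairs_of A w = moved A w"
  unfolding pairs_of_def by (simp add: image_image)

lemma snd_pairs_of: "snd ` pairs_of A w = w ` moved A w"
  unfolding pairs_of_def by (simp add: image_image)

lemma inj_on_fst_pairs_of: "inj_on fst (pairs_of A w)"
  unfolding pairs_of_def inj_on_def by auto

lemma inj_on_snd_pairs_of: "inj_on w (moved A w) \<Longrightarrow> inj_on snd (pairs_of A w)"
  unfolding pairs_of_def by (rule inj_on_imageI) (simp add: comp_def)

lemma index_map_pairs_of: "x \<in> A \<Longrightarrow> index_map (pairs_of A w) x = w x"
proof (cases "x \<in> moved A w")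
  case True
  then have "(x, w x) \<in> pairs_of A w" unfolding pairs_of_def by blast
  then show ?thesis by (rule index_map_eq[OF inj_on_fst_pairs_of])
next
  case False
  assume "x \<in> A"
  then have "w x = x" using False unfolding moved_def by blast
  moreover have "x \<notin> fst ` pairs_of A w" using False by (simp add: fst_pairs_of)
  ultimately show ?thesis using index_map_outside by simp
qed

section \<open>Composing the index maps of two analogies\<close>

text \<open>The index maps u and v of C1 : D1 :: D2 : C2 and C1 : E1 :: E2 : C2 when the domain sets
  c1 = \<delta>(C1), d2 = \<delta>(D2) and e2 = \<delta>(E2) are discrete.\<close>
locale composable_translations =
  fixes A :: "'i set" and S :: "('i \<times> 'i) set" and u v :: "'i \<Rightarrow> 'i"
    and c1 d2 e2 :: "'i set"
  assumes equiv: "equiv A S"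
    and u_class: "x \<in> A \<Longrightarrow> (x, u x) \<in> S" and v_class: "x \<in> A \<Longrightarrow> (x, v x) \<in> S"
    and c1_sub: "c1 \<subseteq> A" and d2_sub: "d2 \<subseteq> A" and e2_sub: "e2 \<subseteq> A"
    and c1_discrete: "discrete S c1" and d2_discrete: "discrete S d2"
    and e2_discrete: "discrete S e2"
    and u_moved: "moved A u \<subseteq> c1 \<inter> d2" and v_moved: "moved A v \<subseteq> c1 \<inter> e2"
    and same_image: "u ` d2 = v ` e2"
begin

lemma u_movedD: "x \<in> A \<Longrightarrow> u x \<noteq> x \<Longrightarrow> x \<in> c1 \<and> x \<in> d2"
  using u_moved unfolding moved_def by blast

lemma v_movedD: "x \<in> A \<Longrightarrow> v x \<noteq> x \<Longrightarrow> x \<in> c1 \<and> x \<in> e2"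
  using v_moved unfolding moved_def by blast

lemma u_inj_on_c1: "inj_on u c1"
  using inj_on_discrete[OF equiv _ c1_sub c1_discrete] u_class by blast

definition composite :: "'i \<Rightarrow> 'i" where
  "composite x = (if x \<in> u ` c1 then v (inv_into c1 u x) else x)"

lemma composite_u: "y \<in> c1 \<Longrightarrow> composite (u y) = v y"
  unfolding composite_def using inv_into_f_f[OF u_inj_on_c1] by simp

lemma composite_class: "x \<in> A \<Longrightarrow> (x, composite x) \<in> S"
proof (cases "x \<in> u ` c1")
  case True
  then obtain y where y: "y \<in> c1" "x = u y" by blast
  then have "(y, x) \<in> S" "(y, v y) \<in> S" using u_class v_class c1_sub by blast+
  then have "(x, v y) \<in> S" using equiv_trans[OF equiv equiv_sym[OF equiv]] by blast
  then show ?thesis using composite_u[OF y(1)] y(2) by simp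
next
  case False
  assume "x \<in> A"
  then show ?thesis using False equiv unfolding composite_def equiv_def refl_on_def by simp
qed

lemma d2_e2_related:
  assumes "z \<in> d2" "x \<in> e2" "u z = v x"
  shows "(z, x) \<in> S"
proof -
  have zA: "z \<in> A" and xA: "x \<in> A" using assms(1,2) d2_sub e2_sub by auto
  have "(x, u z) \<in> S" using v_class[OF xA] assms(3) by simp
  then show ?thesis by (rule equiv_common[OF equiv u_class[OF zA]])
qed

lemma composite_eqI_image:
  assumes z: "z \<in> d2" and x: "x \<in> e2" and uv: "u z = v x" and y: "y \<in> c1" "x = u y"
  shows "composite x = z"
proof -
  have zA: "z \<in> A" and yA: "y \<in> A" using z y d2_sub c1_sub by auto
  have "(x, y) \<in> S" using equiv_sym[OF equiv u_class[OF yA]] y(2) by simp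
  then have zy: "(z, y) \<in> S" by (rule equiv_trans[OF equiv d2_e2_related[OF z x uv]])
  show ?thesis
  proof (cases "u y = y")
    case True
    have "u z = z"
    proof (rule ccontr)
      assume "u z \<noteq> z"
      then have "z = y" using u_movedD[OF zA] discreteD[OF c1_discrete _ y(1) zy] by blast
      then show False using \<open>u z \<noteq> z\<close> True by simp
    qed
    have "composite x = v y" using composite_u[OF y(1)] y(2) by simp
    also have "\<dots> = v x" using True y(2) by simp
    also have "\<dots> = z" using uv \<open>u z = z\<close> by simp
    finally show ?thesis .
  next
    case False
    then have "y \<in> d2" using u_movedD[OF yA] by blast
    then have "z = y" using discreteD[OF d2_discrete z _ zy] by blast
    have "v y = y"
    proof (rule ccontr)
      assume "v y \<noteq> y"
      then have "y \<in> e2" using v_movedD[OF yA] by blast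
      then have "y = x" using discreteD[OF e2_discrete _ x] u_class[OF yA] y(2) by blast
      then show False using False y(2) by simp
    qed
    then show ?thesis using composite_u y \<open>z = y\<close> by simp
  qed
qed

lemma composite_eqI_outside:
  assumes z: "z \<in> d2" and x: "x \<in> e2" and uv: "u z = v x" and x_out: "x \<notin> u ` c1"
  shows "composite x = z"
proof -
  have zA: "z \<in> A" and xA: "x \<in> A" using z x d2_sub e2_sub by auto
  have zx: "(z, x) \<in> S" using d2_e2_related[OF z x uv] .
  have wx: "composite x = x" using x_out unfolding composite_def by simp
  show ?thesis
  proof (cases "u z = z")
    case False
    then have "z \<in> c1" using u_movedD[OF zA] by blast
    then have "v x \<noteq> x" using uv x_out by force
    then have "x \<in> c1" using v_movedD[OF xA] by blast
    then show ?thesis using discreteD[OF c1_discrete \<open>z \<in> c1\<close> _ zx] wx by simp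
  next
    case True
    show ?thesis
    proof (cases "v x = x")
      case True
      then show ?thesis using uv \<open>u z = z\<close> wx by simp
    next
      case False
      then have "x \<in> c1" using v_movedD[OF xA] by blast
      then have "u x \<noteq> x" using x_out by force
      then have "x \<in> d2" using u_movedD[OF xA] by blast
      then show ?thesis using discreteD[OF d2_discrete z _ zx] wx by simp
    qed
  qed
qed

lemma composite_eqI: "z \<in> d2 \<Longrightarrow> x \<in> e2 \<Longrightarrow> u z = v x \<Longrightarrow> composite x = z"
  using composite_eqI_image composite_eqI_outside by blast

lemma composite_on_e2:
  assumes "x \<in> e2"
  shows "composite x \<in> d2" "u (composite x) = v x"
proof -
  obtain z where "z \<in> d2" "v x = u z" using same_image assms by (metis imageE imageI)
  then show "composite x \<in> d2" "u (composite x) = v x" using composite_eqI[OF _ assms] by auto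
qed

lemma moved_composite: "moved A composite \<subseteq> u ` c1 \<inter> e2"
proof
  fix x assume "x \<in> moved A composite"
  then have xA: "x \<in> A" and moves: "composite x \<noteq> x" unfolding moved_def by auto
  then have "x \<in> u ` c1" unfolding composite_def by (auto split: if_splits)
  then obtain y where y: "y \<in> c1" "x = u y" by blast
  have yA: "y \<in> A" using y c1_sub by blast
  have vu: "v y \<noteq> u y" using moves composite_u y by simp
  have "x \<in> e2"
  proof (cases "u y = y")
    case True
    then show ?thesis using v_movedD[OF yA] vu y(2) by simp
  next
    case False
    then have "u y \<in> v ` e2" using u_movedD[OF yA] same_image by blast
    then obtain x' where x': "x' \<in> e2" "u y = v x'" by blast
    have x'A: "x' \<in> A" using x' e2_sub by blast
    have "v x' = x'"
    proof (rule ccontr)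
      assume "v x' \<noteq> x'"
      then have "x' \<in> c1" using v_movedD[OF x'A] by blast
      have "(y, v x') \<in> S" using u_class[OF yA] x'(2) by simp
      then have "(x', y) \<in> S" by (rule equiv_common[OF equiv v_class[OF x'A]])
      then have "x' = y" using discreteD[OF c1_discrete \<open>x' \<in> c1\<close> y(1)] by blast
      then show False using vu x'(2) by simp
    qed
    then show ?thesis using x' y(2) by simp
  qed
  then show "x \<in> u ` c1 \<inter> e2" using \<open>x \<in> u ` c1\<close> by blast
qed

end

section \<open>Feature translations in a domain constrained interpretation\<close>

abbreviation indices :: "('a,'r,'d,'f) dci \<Rightarrow> nat set" where
  "indices I \<equiv> {1..nparts I}"

definition part_index :: "('a,'r,'d,'f) dci \<Rightarrow> 'f \<Rightarrow> nat" where
  "part_index I f = (THE i. i \<in> indices I \<and> f \<in> part I i)"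

definition translate :: "('a,'r,'d,'f) dci \<Rightarrow> (nat \<Rightarrow> nat) \<Rightarrow> 'f \<Rightarrow> 'f" where
  "translate I u f = sig I (part_index I f) (u (part_index I f)) f"

locale valid_interp =
  fixes I :: "('a,'r,'d,'f) dci"
  assumes valid: "valid_dci I"
begin

lemma part_disjoint:
  assumes "i \<in> indices I" "j \<in> indices I" "f \<in> part I i" "f \<in> part I j"
  shows "i = j"
proof -
  have "\<forall>i\<in>indices I. \<forall>j\<in>indices I. i \<noteq> j \<longrightarrow> part I i \<inter> part I j = {}"
    using valid unfolding valid_dci_def by (elim conjE) assumption
  then show ?thesis using assms by blast
qed

lemma part_nonempty: "i \<in> indices I \<Longrightarrow> part I i \<noteq> {}"
proof -
  have "\<forall>i\<in>indices I. part I i \<noteq> {}"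
    using valid unfolding valid_dci_def by (elim conjE) assumption
  then show "i \<in> indices I \<Longrightarrow> part I i \<noteq> {}" by blast
qed

lemma feats_eq_parts: "feats I = (\<Union>i\<in>indices I. part I i)"
  using valid unfolding valid_dci_def by (elim conjE) (rule sym)

lemma finite_feats: "finite (feats I)"
  using valid unfolding valid_dci_def by (elim conjE) assumption

lemma equiv_sim: "equiv (indices I) (sim I)"
  using valid unfolding valid_dci_def by (elim conjE) assumption

lemma sig_in_part:
  assumes "(s, t) \<in> sim I" "f \<in> part I s"
  shows "sig I s t f \<in> part I t"
proof -
  have "\<forall>(s, t)\<in>sim I. bij_betw (sig I s t) (part I s) (part I t)"
    using valid unfolding valid_dci_def by (elim conjE) assumption
  then show ?thesis using assms bij_betw_apply by fast
qed

lemma sig_inverse: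
  assumes "(s, t) \<in> sim I" "f \<in> part I s"
  shows "sig I t s (sig I s t f) = f"
proof -
  have "\<forall>(s, t)\<in>sim I. \<forall>x\<in>part I s. sig I t s (sig I s t x) = x"
    using valid unfolding valid_dci_def by (elim conjE) assumption
  then show ?thesis using assms by blast
qed

lemma sig_compose:
  assumes "(s, t) \<in> sim I" "(t, r) \<in> sim I" "f \<in> part I s"
  shows "sig I t r (sig I s t f) = sig I s r f"
proof -
  have "\<forall>s t u. (s, t) \<in> sim I \<and> (t, u) \<in> sim I \<longrightarrow>
      (\<forall>x\<in>part I s. sig I t u (sig I s t x) = sig I s u x)"
    using valid unfolding valid_dci_def by (elim conjE) assumption
  then show ?thesis using assms by blast
qed

lemma sig_refl:
  assumes "s \<in> indices I" "f \<in> part I s"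
  shows "sig I s s f = f"
proof -
  have ss: "(s, s) \<in> sim I" using equiv_sim assms(1) unfolding equiv_def refl_on_def by blast
  have "sig I s s f = sig I s s (sig I s s (sig I s s f))"
    using sig_inverse[OF ss sig_in_part[OF ss assms(2)]] by simp
  also have "\<dots> = f" using sig_compose[OF ss ss assms(2)] sig_inverse[OF ss assms(2)] by simp
  finally show ?thesis .
qed

lemma part_subset_feats: "i \<in> indices I \<Longrightarrow> part I i \<subseteq> feats I"
  using feats_eq_parts by blast

lemma feats_in_part: "f \<in> feats I \<Longrightarrow> \<exists>i\<in>indices I. f \<in> part I i"
  using feats_eq_parts by blast

lemma part_index_eq: "i \<in> indices I \<Longrightarrow> f \<in> part I i \<Longrightarrow> part_index I f = i"
  unfolding part_index_def by (rule the_equality) (auto intro: part_disjoint)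

lemma translate_part: "i \<in> indices I \<Longrightarrow> f \<in> part I i \<Longrightarrow> translate I u f = sig I i (u i) f"
  unfolding translate_def using part_index_eq by simp

lemma translate_in_part:
  assumes "translation_map (indices I) (sim I) u" "i \<in> indices I" "f \<in> part I i"
  shows "translate I u f \<in> part I (u i)"
  using assms sig_in_part translate_part unfolding translation_map_def by simp

lemma translate_translate:
  assumes u: "translation_map (indices I) (sim I) u" and w: "translation_map (indices I) (sim I) w"
    and i: "i \<in> indices I" and f: "f \<in> part I i" and wu: "w (u i) = v i"
  shows "translate I w (translate I u f) = translate I v f"
proof -
  have ui: "u i \<in> indices I" using translation_map_closed[OF equiv_sim u i] .
  have "(i, u i) \<in> sim I" "(u i, w (u i)) \<in> sim I"
    using u w i ui unfolding translation_map_def by blast+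
  then have "sig I (u i) (w (u i)) (sig I i (u i) f) = sig I i (v i) f"
    using sig_compose f wu by simp
  then show ?thesis
    using translate_part[OF i f] translate_part[OF ui translate_in_part[OF u i f]] by simp
qed

lemma translate_cong: "\<forall>i\<in>indices I. u i = u' i \<Longrightarrow> f \<in> feats I \<Longrightarrow> translate I u f = translate I u' f"
  using feats_in_part translate_part by metis

lemma translate_ident: "\<forall>i\<in>indices I. u i = i \<Longrightarrow> f \<in> feats I \<Longrightarrow> translate I u f = f"
  using feats_in_part translate_part sig_refl by metis

lemma inj_on_translate:
  assumes u: "translation_map (indices I) (sim I) u" and "inj_on u K" "K \<subseteq> indices I"
  shows "inj_on (translate I u) (\<Union>(part I ` K))"
proof (rule inj_onI)
  fix f g assume "f \<in> \<Union>(part I ` K)" "g \<in> \<Union>(part I ` K)" and eq: "translate I u f = translate I u g"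
  then obtain i j where i: "i \<in> K" "f \<in> part I i" and j: "j \<in> K" "g \<in> part I j" by blast
  have "i \<in> indices I" "j \<in> indices I" using i j assms(3) by auto
  then have "u i = u j"
    using part_disjoint translation_map_closed[OF equiv_sim u] translate_in_part[OF u] i j eq
    by metis
  then have "i = j" using assms(2) i j unfolding inj_on_def by blast
  have "(i, u i) \<in> sim I" using u \<open>i \<in> indices I\<close> unfolding translation_map_def by blast
  moreover have "sig I i (u i) f = sig I i (u i) g"
    using eq translate_part \<open>i \<in> indices I\<close> i j \<open>i = j\<close> by metis
  ultimately show "f = g" using sig_inverse i j \<open>i = j\<close> by metis
qed

lemma translate_in_feats:
  assumes u: "translation_map (indices I) (sim I) u" and f: "f \<in> feats I"
  shows "translate I u f \<in> feats I"
proof -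
  obtain i where i: "i \<in> indices I" "f \<in> part I i" using feats_in_part f by blast
  then show ?thesis
    using translate_in_part[OF u i] part_subset_feats translation_map_closed[OF equiv_sim u i(1)]
    by blast
qed

lemma translate_ident_image: "\<forall>i\<in>indices I. u i = i \<Longrightarrow> G \<subseteq> feats I \<Longrightarrow> translate I u ` G = G"
  using translate_ident by force

lemma ext_subset_Delta: "ext I C \<subseteq> Delta I"
proof -
  have "\<forall>a. cint I a \<subseteq> Delta I" using valid unfolding valid_dci_def by (elim conjE) assumption
  moreover have "\<forall>a. nint I a \<subseteq> Delta I" using valid unfolding valid_dci_def by (elim conjE) assumption
  ultimately show ?thesis by (induction C) auto
qed

lemma phi_subset_feats: "phi I C \<subseteq> feats I"
proof (cases "ext I C = {}")
  case True
  then show ?thesis unfolding phi_def phiS_def by simp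
next
  case False
  then obtain d where d: "d \<in> ext I C" by blast
  have "\<forall>d\<in>Delta I. ppi I d \<subseteq> feats I" using valid unfolding valid_dci_def by (elim conjE) assumption
  then have "ppi I d \<subseteq> feats I" using d ext_subset_Delta by blast
  then show ?thesis unfolding phi_def phiS_def using d by auto
qed

lemma delta_subset: "delta I C \<subseteq> indices I"
  unfolding delta_def by blast

lemma phi_subset_parts: "phi I C \<subseteq> \<Union>(part I ` delta I C)"
proof
  fix f assume f: "f \<in> phi I C"
  then obtain i where "i \<in> indices I" "f \<in> part I i"
    using feats_in_part phi_subset_feats by blast
  then show "f \<in> \<Union>(part I ` delta I C)" using f unfolding delta_def by blast
qed

lemma delta_feats: "phi I C = feats I \<Longrightarrow> delta I C = indices I"
  unfolding delta_def by (auto simp: Int_absorb2 part_subset_feats part_nonempty)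

text \<open>Two features of \<phi>(C) from distinct related domains would form an element of \<X> by (5)
  inside \<pi>(d) for any d \<in> C, contrary to (1).\<close>
lemma discrete_delta:
  assumes "phi I C \<noteq> feats I"
  shows "discrete (sim I) (delta I C)"
  unfolding discrete_def
proof (intro ballI impI)
  fix i j assume i: "i \<in> delta I C" and j: "j \<in> delta I C" and ij: "(i, j) \<in> sim I"
  have "ext I C \<noteq> {}" using assms unfolding phi_def phiS_def by auto
  then obtain d where d: "d \<in> ext I C" by blast
  then have "d \<in> Delta I" using ext_subset_Delta by blast
  have "phi I C \<subseteq> ppi I d" unfolding phi_def phiS_def using d by auto
  obtain f g where "f \<in> part I i" "f \<in> phi I C" "g \<in> part I j" "g \<in> phi I C"
    using i j unfolding delta_def by blast
  then have "{f, g} \<subseteq> ppi I d" using \<open>phi I C \<subseteq> ppi I d\<close> by blast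
  have no_X: "\<forall>d\<in>Delta I. \<forall>X\<in>XX I. \<not> X \<subseteq> ppi I d"
    using valid unfolding valid_dci_def by (elim conjE) assumption
  have sep: "\<forall>(i, j)\<in>sim I. i \<noteq> j \<longrightarrow> (\<forall>f\<in>part I i. \<forall>g\<in>part I j. {f, g} \<in> XX I)"
    using valid unfolding valid_dci_def by (elim conjE) assumption
  show "i = j"
  proof (rule ccontr)
    assume "i \<noteq> j"
    then have "{f, g} \<in> XX I"
      using bspec[OF sep ij] \<open>f \<in> part I i\<close> \<open>g \<in> part I j\<close> by simp
    then show False using bspec[OF no_X \<open>d \<in> Delta I\<close>] \<open>{f, g} \<subseteq> ppi I d\<close> by blast
  qed
qed

lemma delta_translate:
  assumes u: "translation_map (indices I) (sim I) u" and D: "phi I D = translate I u ` phi I C"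
  shows "delta I D = u ` delta I C"
proof
  show "delta I D \<subseteq> u ` delta I C"
  proof
    fix j assume "j \<in> delta I D"
    then obtain f where j: "j \<in> indices I" and f: "f \<in> phi I C" "translate I u f \<in> part I j"
      unfolding delta_def D by blast
    obtain i where i: "i \<in> indices I" "f \<in> part I i"
      using feats_in_part phi_subset_feats f(1) by blast
    have "j = u i"
      using part_disjoint[OF j translation_map_closed[OF equiv_sim u i(1)] f(2)]
        translate_in_part[OF u i] by blast
    moreover have "i \<in> delta I C" unfolding delta_def using i f by blast
    ultimately show "j \<in> u ` delta I C" by blast
  qed
  show "u ` delta I C \<subseteq> delta I D"
  proof
    fix j assume "j \<in> u ` delta I C"
    then obtain i f where i: "i \<in> indices I" "f \<in> part I i" and "f \<in> phi I C" "j = u i"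
      unfolding delta_def by blast
    then show "j \<in> delta I D"
      using translate_in_part[OF u i] translation_map_closed[OF equiv_sim u i(1)]
      unfolding delta_def D by blast
  qed
qed

lemma translate_image_compose:
  assumes a: "translation_map (indices I) (sim I) a" and b: "translation_map (indices I) (sim I) b"
    and ba: "\<forall>i\<in>delta I C. b (a i) = c i"
  shows "translate I b ` translate I a ` phi I C = translate I c ` phi I C"
  unfolding image_image
proof (rule image_cong[OF refl])
  fix f assume "f \<in> phi I C"
  then obtain i where "i \<in> delta I C" "f \<in> part I i" using phi_subset_parts by blast
  then show "translate I b (translate I a f) = translate I c f"
    using translate_translate[OF a b _ _] ba delta_subset by blast
qed

end

section \<open>Analogies as shared index maps\<close>

definition translates ::
  "('a,'r,'d,'f) dci \<Rightarrow> (nat \<Rightarrow> nat) \<Rightarrow> ('a,'r) concept \<Rightarrow> ('a,'r) concept \<Rightarrow> bool" where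
  "translates I u C D \<longleftrightarrow> translation_map (indices I) (sim I) u
     \<and> admissible_for (indices I) u (delta I C) \<and> phi I D = translate I u ` phi I C"

context valid_interp
begin

lemma validU_indices: "validU I U \<Longrightarrow> (s, t) \<in> U \<Longrightarrow> s \<in> indices I \<and> t \<in> indices I"
  unfolding validU_def using equiv_type[OF equiv_sim] by blast

lemma sigU_eq_translate:
  assumes U: "validU I U" and f: "f \<in> feats I"
  shows "sigU I U f = translate I (index_map U) f"
proof -
  obtain i where i: "i \<in> indices I" "f \<in> part I i" using feats_in_part f by blast
  have inj: "inj_on fst U" using U unfolding validU_def by blast
  have from_i: "p \<in> U \<and> f \<in> part I (fst p) \<longleftrightarrow> p \<in> U \<and> fst p = i" for p
  proof -
    have "fst p = i" if "p \<in> U" "f \<in> part I (fst p)"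
      using part_disjoint[OF _ i(1) that(2) i(2)] validU_indices[OF U, of "fst p" "snd p"] that(1)
      by simp
    then show ?thesis using i(2) by blast
  qed
  show ?thesis
  proof (cases "i \<in> fst ` U")
    case True
    then obtain t where it: "(i, t) \<in> U" by force
    have "(SOME p. p \<in> U \<and> f \<in> part I (fst p)) = (i, t)"
    proof (rule some_equality)
      show "(i, t) \<in> U \<and> f \<in> part I (fst (i, t))" using it i(2) by simp
      fix p assume "p \<in> U \<and> f \<in> part I (fst p)"
      then have "p \<in> U" "fst p = fst (i, t)" using from_i by auto
      then show "p = (i, t)" using inj_onD[OF inj _ _ it] by blast
    qed
    moreover have "\<exists>p\<in>U. f \<in> part I (fst p)" using it i(2) by force
    ultimately have "sigU I U f = sig I i t f" unfolding sigU_def by (simp add: Let_def)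
    then show ?thesis using translate_part[OF i] index_map_eq[OF inj it] by simp
  next
    case False
    have "\<not> (\<exists>p\<in>U. f \<in> part I (fst p))"
    proof
      assume "\<exists>p\<in>U. f \<in> part I (fst p)"
      then obtain p where "p \<in> U" "fst p = i" using from_i by blast
      then show False using False by force
    qed
    then have "sigU I U f = f" unfolding sigU_def by simp
    then show ?thesis using translate_part[OF i] index_map_outside[OF False] sig_refl[OF i] by simp
  qed
qed

lemma mu_imp_translates:
  assumes "\<sigma> \<in> mu I C D"
  shows "\<exists>U. validU I U \<and> \<sigma> = sigU I U \<and> translates I (index_map U) C D"
proof -
  obtain U where U: "validU I U" "\<sigma> = sigU I U" "phi I D = sigU I U ` phi I C"
    "fst ` U \<subseteq> delta I C" "snd ` U \<inter> (delta I C - fst ` U) = {}"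
    using assms unfolding mu_def by blast
  have inj: "U \<subseteq> sim I" "inj_on fst U" "inj_on snd U" using U(1) unfolding validU_def by auto
  have "sigU I U ` phi I C = translate I (index_map U) ` phi I C"
    by (rule image_cong[OF refl]) (simp add: sigU_eq_translate[OF U(1)] subsetD[OF phi_subset_feats])
  then show ?thesis
    using U(1,2,3) translation_map_index_map[OF equiv_sim inj]
      admissible_for_index_map[OF inj(2,3) delta_subset U(4,5)]
    unfolding translates_def by auto
qed

lemma translates_imp_mu:
  assumes w: "translates I w C D"
  shows "sigU I (pairs_of (indices I) w) \<in> mu I C D"
proof -
  let ?U = "pairs_of (indices I) w"
  have tm: "translation_map (indices I) (sim I) w"
    and adm: "admissible_for (indices I) w (delta I C)"
    and D: "phi I D = translate I w ` phi I C"
    using w unfolding translates_def by auto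
  have "?U \<subseteq> sim I" using tm unfolding translation_map_def pairs_of_def moved_def by auto
  then have U: "validU I ?U"
    unfolding validU_def using inj_on_fst_pairs_of inj_on_snd_pairs_of tm
    unfolding translation_map_def by blast
  have im: "\<forall>i\<in>indices I. index_map ?U i = w i" by (simp add: index_map_pairs_of)
  have "sigU I ?U f = translate I w f" if "f \<in> feats I" for f
    using sigU_eq_translate[OF U that] translate_cong[OF im that] by simp
  then have "sigU I ?U ` phi I C = translate I w ` phi I C"
    by (intro image_cong[OF refl]) (simp add: subsetD[OF phi_subset_feats])
  then have "phi I D = sigU I ?U ` phi I C" using D by simp
  moreover have "fst ` ?U \<subseteq> delta I C" "snd ` ?U \<inter> (delta I C - fst ` ?U) = {}"
    using adm unfolding admissible_for_def fst_pairs_of snd_pairs_of by auto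
  ultimately show ?thesis unfolding mu_def using U by (intro CollectI exI[of _ ?U]) simp
qed

lemma index_map_unique:
  assumes U: "validU I U" and U': "validU I U'" and eq: "sigU I U = sigU I U'"
  shows "index_map U = index_map U'"
proof
  fix x
  show "index_map U x = index_map U' x"
  proof (cases "x \<in> indices I")
    case True
    obtain f where f: "f \<in> part I x" using part_nonempty[OF True] by blast
    have tm: "translation_map (indices I) (sim I) (index_map U)"
      "translation_map (indices I) (sim I) (index_map U')"
      using U U' translation_map_index_map[OF equiv_sim] unfolding validU_def by auto
    have "f \<in> feats I" using f part_subset_feats[OF True] by blast
    then have "translate I (index_map U) f = translate I (index_map U') f"
      using sigU_eq_translate[OF U] sigU_eq_translate[OF U'] eq by metis
    then have "translate I (index_map U) f \<in> part I (index_map U' x)"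
      using translate_in_part[OF tm(2) True f] by simp
    then show ?thesis
      using part_disjoint[OF translation_map_closed[OF equiv_sim tm(1) True]
          translation_map_closed[OF equiv_sim tm(2) True] translate_in_part[OF tm(1) True f]]
      by simp
  next
    case False
    have "x \<notin> fst ` V" if "validU I V" for V
    proof
      assume "x \<in> fst ` V"
      then obtain t where "(x, t) \<in> V" by force
      then show False using validU_indices[OF that] False by blast
    qed
    then show ?thesis using index_map_outside U U' by metis
  qed
qed

lemma sat_Analogy_iff:
  "sat I (Analogy C D C' D') \<longleftrightarrow> (\<exists>u. translates I u C D \<and> translates I u C' D')"
proof
  assume "sat I (Analogy C D C' D')"
  then obtain \<sigma> where "\<sigma> \<in> mu I C D" "\<sigma> \<in> mu I C' D'" by auto
  obtain U where U: "validU I U" "\<sigma> = sigU I U" "translates I (index_map U) C D"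
    using mu_imp_translates[OF \<open>\<sigma> \<in> mu I C D\<close>] by blast
  obtain U' where U': "validU I U'" "\<sigma> = sigU I U'" "translates I (index_map U') C' D'"
    using mu_imp_translates[OF \<open>\<sigma> \<in> mu I C' D'\<close>] by blast
  have "index_map U = index_map U'" using index_map_unique[OF U(1) U'(1)] U(2) U'(2) by simp
  then show "\<exists>u. translates I u C D \<and> translates I u C' D'" using U(3) U'(3) by auto
next
  assume "\<exists>u. translates I u C D \<and> translates I u C' D'"
  then obtain u where "translates I u C D" "translates I u C' D'" by blast
  then show "sat I (Analogy C D C' D')"
    using translates_imp_mu[of u C D] translates_imp_mu[of u C' D'] by auto
qed

lemma translates_from_feats:
  assumes "translates I u C D" "phi I C = feats I"
  shows "phi I D = feats I"
proof -
  have u: "translation_map (indices I) (sim I) u"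
    and all: "admissible_for (indices I) u (indices I)" and D: "phi I D = translate I u ` feats I"
    using assms delta_feats unfolding translates_def by auto
  have "inj_on u (indices I)" by (rule admissible_for_all_inj_on[OF u all])
  then have "inj_on (translate I u) (feats I)"
    using inj_on_translate[OF u _ order_refl] feats_eq_parts by simp
  moreover have "translate I u ` feats I \<subseteq> feats I" using translate_in_feats[OF u] by blast
  ultimately show ?thesis using D endo_inj_surj[OF finite_feats] by simp
qed

lemma translates_onto_feats:
  assumes "translates I u C D" "phi I D = feats I"
  shows "phi I C = feats I"
proof -
  have "card (feats I) \<le> card (phi I C)"
    using assms card_image_le finite_subset[OF phi_subset_feats finite_feats]
    unfolding translates_def by metis
  then show ?thesis using card_seteq[OF finite_feats phi_subset_feats] by blast
qed

lemma translates_fixes_proper: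
  assumes "translates I u C D" "phi I C = feats I" "translates I u C' D'" "phi I C' \<noteq> feats I"
  shows "phi I D' = phi I C'"
proof -
  have u: "translation_map (indices I) (sim I) u"
    and all: "admissible_for (indices I) u (indices I)"
    and proper: "admissible_for (indices I) u (delta I C')"
    and D': "phi I D' = translate I u ` phi I C'"
    using assms(1-3) delta_feats unfolding translates_def by auto
  have "\<forall>i\<in>indices I. u i = i"
    using admissible_for_all_and_discrete[OF equiv_sim u all delta_subset
        discrete_delta[OF assms(4)] proper] by blast
  then show ?thesis using D' translate_ident_image phi_subset_feats by simp
qed

lemma translates_id: "phi I D = phi I C \<Longrightarrow> translates I id C D"
  unfolding translates_def translation_map_def admissible_for_def moved_def
  using equiv_sim translate_ident_image[of id] phi_subset_feats
  by (simp add: equiv_def refl_on_def)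

lemma translates_degenerate:
  assumes u1: "translates I u C1 D1" and u2: "translates I u D2 C2"
    and v1: "translates I v C1 E1" and v2: "translates I v E2 C2"
    and "phi I C1 = feats I \<or> phi I C2 = feats I"
  shows "phi I E1 = phi I D1 \<and> phi I D2 = phi I E2"
proof -
  consider (both) "phi I C1 = feats I" "phi I C2 = feats I"
    | (C1) "phi I C1 = feats I" "phi I C2 \<noteq> feats I"
    | (C2) "phi I C1 \<noteq> feats I" "phi I C2 = feats I"
    using assms(5) by blast
  then show ?thesis
  proof cases
    case both
    then show ?thesis
      using translates_from_feats[OF u1] translates_from_feats[OF v1]
        translates_onto_feats[OF u2] translates_onto_feats[OF v2] by simp
  next
    case C1
    have "phi I D2 \<noteq> feats I" "phi I E2 \<noteq> feats I"
      using C1 translates_from_feats[OF u2] translates_from_feats[OF v2] by auto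
    then show ?thesis
      using C1 translates_from_feats[OF u1] translates_from_feats[OF v1]
        translates_fixes_proper[OF u1 _ u2] translates_fixes_proper[OF v1 _ v2] by simp
  next
    case C2
    have "phi I D2 = feats I" "phi I E2 = feats I"
      using C2 translates_onto_feats[OF u2] translates_onto_feats[OF v2] by auto
    then show ?thesis
      using C2 translates_fixes_proper[OF u2 _ u1] translates_fixes_proper[OF v2 _ v1] by simp
  qed
qed

lemma phi_translate_factor:
  assumes u: "translates I u C D" and v: "translates I v C E"
    and w: "translation_map (indices I) (sim I) w" and wu: "\<forall>i\<in>delta I C. w (u i) = v i"
  shows "phi I E = translate I w ` phi I D"
proof -
  have um: "translation_map (indices I) (sim I) u" using u unfolding translates_def by blast
  have "phi I E = translate I v ` phi I C" using v unfolding translates_def by blast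
  also have "\<dots> = translate I w ` translate I u ` phi I C"
    using translate_image_compose[OF um w wu] by simp
  also have "\<dots> = translate I w ` phi I D" using u unfolding translates_def by simp
  finally show ?thesis .
qed

lemma phi_translate_cancel:
  assumes u: "translates I u D C" and v: "translates I v E C"
    and w: "translation_map (indices I) (sim I) w" and D: "discrete (sim I) (delta I D)"
    and w_into: "\<forall>i\<in>delta I E. w i \<in> delta I D" and uw: "\<forall>i\<in>delta I E. u (w i) = v i"
  shows "phi I D = translate I w ` phi I E"
proof -
  have um: "translation_map (indices I) (sim I) u" using u unfolding translates_def by blast
  have "translate I u ` phi I D = translate I v ` phi I E"
    using u v unfolding translates_def by simp
  also have "\<dots> = translate I u ` translate I w ` phi I E"
    using translate_image_compose[OF w um uw] by simp
  finally have eq: "translate I u ` phi I D = translate I u ` translate I w ` phi I E" .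
  have sub: "translate I w ` phi I E \<subseteq> \<Union>(part I ` delta I D)"
  proof
    fix g assume "g \<in> translate I w ` phi I E"
    then obtain f where f: "f \<in> phi I E" "g = translate I w f" by blast
    then obtain i where i: "i \<in> delta I E" "f \<in> part I i" using phi_subset_parts by blast
    then have "translate I w f \<in> part I (w i)"
      using translate_in_part[OF w subsetD[OF delta_subset i(1)] i(2)] by blast
    then show "g \<in> \<Union>(part I ` delta I D)" using w_into i(1) f(2) by blast
  qed
  have "\<forall>x\<in>indices I. (x, u x) \<in> sim I" using um unfolding translation_map_def by blast
  then have inj: "inj_on (translate I u) (\<Union>(part I ` delta I D))"
    using inj_on_translate[OF um inj_on_discrete[OF equiv_sim _ delta_subset D] delta_subset]
    by blast
  show ?thesis using inj_on_image_eq_iff[OF inj phi_subset_parts sub] eq by simp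
qed

lemma translates_compose_discrete:
  assumes u1: "translates I u C1 D1" and u2: "translates I u D2 C2"
    and v1: "translates I v C1 E1" and v2: "translates I v E2 C2"
    and "discrete (sim I) (delta I C1)" "discrete (sim I) (delta I D2)"
    and "discrete (sim I) (delta I E2)"
  shows "\<exists>w. translates I w D1 E1 \<and> translates I w E2 D2"
proof -
  have u: "translation_map (indices I) (sim I) u" and v: "translation_map (indices I) (sim I) v"
    using u1 v1 unfolding translates_def by auto
  have u_class: "\<forall>x\<in>indices I. (x, u x) \<in> sim I" and v_class: "\<forall>x\<in>indices I. (x, v x) \<in> sim I"
    using u v unfolding translation_map_def by auto
  have D1: "delta I D1 = u ` delta I C1"
    using delta_translate[OF u, of D1 C1] u1 unfolding translates_def by blast
  have "delta I C2 = u ` delta I D2" "delta I C2 = v ` delta I E2"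
    using delta_translate[OF u, of C2 D2] delta_translate[OF v, of C2 E2] u2 v2
    unfolding translates_def by auto
  moreover have "moved (indices I) u \<subseteq> delta I C1 \<inter> delta I D2"
    "moved (indices I) v \<subseteq> delta I C1 \<inter> delta I E2"
    using u1 u2 v1 v2 unfolding translates_def admissible_for_def by auto
  ultimately interpret comp: composable_translations "indices I" "sim I" u v
    "delta I C1" "delta I D2" "delta I E2"
    using assms(5-7) equiv_sim u_class v_class delta_subset by unfold_locales auto
  let ?w = comp.composite
  have w_class: "\<forall>x\<in>indices I. (x, ?w x) \<in> sim I" using comp.composite_class by blast
  have "discrete (sim I) (delta I D1)"
    using D1 discrete_image[OF equiv_sim u_class delta_subset assms(5)] by simp
  moreover have "moved (indices I) ?w \<subseteq> delta I D1" using comp.moved_composite D1 by auto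
  ultimately have w: "translation_map (indices I) (sim I) ?w"
    and w_D1: "admissible_for (indices I) ?w (delta I D1)"
    using translation_map_admissible_for_discrete[OF equiv_sim w_class delta_subset] by blast+
  have "moved (indices I) ?w \<subseteq> delta I E2" using comp.moved_composite by auto
  then have w_E2: "admissible_for (indices I) ?w (delta I E2)"
    using translation_map_admissible_for_discrete[OF equiv_sim w_class delta_subset assms(7)]
    by blast
  have "phi I E1 = translate I ?w ` phi I D1"
    using phi_translate_factor[OF u1 v1 w] comp.composite_u by blast
  moreover have "phi I D2 = translate I ?w ` phi I E2"
    using phi_translate_cancel[OF u2 v2 w assms(6)] comp.composite_on_e2 by blast
  ultimately show ?thesis using w w_D1 w_E2 unfolding translates_def by blast
qed

lemma translates_compose:
  assumes "translates I u C1 D1" "translates I u D2 C2" "translates I v C1 E1" "translates I v E2 C2"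
  shows "\<exists>w. translates I w D1 E1 \<and> translates I w E2 D2"
proof (cases "phi I C1 = feats I \<or> phi I C2 = feats I")
  case True
  then have "phi I E1 = phi I D1 \<and> phi I D2 = phi I E2" by (rule translates_degenerate[OF assms])
  then have "translates I id D1 E1 \<and> translates I id E2 D2" using translates_id by auto
  then show ?thesis by blast
next
  case False
  then have "phi I C1 \<noteq> feats I" "phi I D2 \<noteq> feats I" "phi I E2 \<noteq> feats I"
    using translates_from_feats[OF assms(2)] translates_from_feats[OF assms(4)] by auto
  then show ?thesis
    using translates_compose_discrete[OF assms discrete_delta discrete_delta discrete_delta] by blast
qed

end

theorem proposition7:
  fixes C1 C2 D1 D2 E1 E2 :: "('a,'r) concept"
    and I :: "('a,'r,'d,'f) dci"
  assumes "natural C1" "natural C2" "natural D1" "natural D2" "natural E1" "natural E2"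
    and "is_model I {Analogy C1 D1 D2 C2, Analogy C1 E1 E2 C2}"
  shows "sat I (Analogy D1 E1 E2 D2)"
proof -
  interpret valid_interp I using assms(7) unfolding is_model_def by unfold_locales blast
  have "sat I (Analogy C1 D1 D2 C2)" "sat I (Analogy C1 E1 E2 C2)"
    using assms(7) unfolding is_model_def by auto
  then obtain u v where "translates I u C1 D1" "translates I u D2 C2"
    and "translates I v C1 E1" "translates I v E2 C2"
    unfolding sat_Analogy_iff by blast
  then obtain w where "translates I w D1 E1" "translates I w E2 D2"
    using translates_compose by blast
  then show ?thesis unfolding sat_Analogy_iff by blast
qed

end
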